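(* Let $\mathcal{G}_s$ be a connected signed graph on nodes $\{1,\dots,n\}$ with symmetric real weight matrix $W$, signed adjacency matrix $A_s$, signed degree matrix $D_s=\mathrm{diag}\big(\sum_j|[A_s]_{ij}|\big)$ and signed Laplacian $L_s=D_s-A_s$. Take node $n$ as the single input node and partition $$L_s=\begin{bmatrix}A_s^f & B_s^f\\ (B_s^f)^T & a_s\end{bmatrix},\qquad A_s^f\in\mathbb{R}^{(n-1)\times(n-1)},\ B_s^f\in\mathbb{R}^{n-1},$$ and consider the leader-follower signed consensus system $\dot x=-A_s^fx-B_s^fu$ with scalar input $u$. Suppose $\mathcal{G}_s$ is structurally balanced, i.e. there is $G_t=\mathrm{diag}(\sigma_1,\dots,\sigma_n)$, $\sigma_i\in\{\pm1\}$, with $G_tA_sG_t$ entrywise nonnegative, and suppose it is input symmetric: for the unsigned Laplacian $L=G_tL_sG_t$ there is a permutation matrix $\Pi\neq I$ with $\Pi L=L\Pi$ and $\Pi e_n=e_n$. Then the system $\dot x=-A_s^fx-B_s^fu$ is uncontrollable.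
   Context: $L=G_tL_sG_t$ is the Laplacian of the underlying unsigned graph with edge weights $|W_{ij}|$; a permutation matrix commuting with it corresponds to a weight-preserving graph automorphism, here required to fix the input node $n$ and be nontrivial. *)

theory Defs
  imports "Jordan_Normal_Form.DL_Rank"
begin

text \<open>Nodes are indexed 0,...,n-1 (node k of the paper is index k-1);
the input node n of the paper is index n-1.  Matrices are JNF matrices.\<close>

definition signed_adj :: "real mat \<Rightarrow> real mat" where
  "signed_adj W = W"

definition signed_deg :: "real mat \<Rightarrow> real mat" where
  "signed_deg A = mat (dim_row A) (dim_row A)
     (\<lambda>(i,j). if i = j then (\<Sum>k<dim_col A. \<bar>A $$ (i,k)\<bar>) else 0)"

definition signed_laplacian :: "real mat \<Rightarrow> real mat" where
  "signed_laplacian W = signed_deg (signed_adj W) - signed_adj W"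

text \<open>Signed graph on n nodes given by a symmetric weight matrix without self-loops;
edge {i,j} present iff W_ij \<noteq> 0.\<close>
definition signed_graph :: "nat \<Rightarrow> real mat \<Rightarrow> bool" where
  "signed_graph n W \<longleftrightarrow> W \<in> carrier_mat n n \<and> transpose_mat W = W \<and>
     (\<forall>i<n. W $$ (i,i) = 0)"

definition connected_graph :: "nat \<Rightarrow> real mat \<Rightarrow> bool" where
  "connected_graph n W \<longleftrightarrow>
     (\<forall>i<n. \<forall>j<n. (\<lambda>a b. a < n \<and> b < n \<and> W $$ (a,b) \<noteq> 0)\<^sup>*\<^sup>* i j)"

definition gauge_mat :: "nat \<Rightarrow> (nat \<Rightarrow> real) \<Rightarrow> real mat" where
  "gauge_mat n \<sigma> = mat n n (\<lambda>(i,j). if i = j then \<sigma> i else 0)"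

definition perm_mat :: "nat \<Rightarrow> (nat \<Rightarrow> nat) \<Rightarrow> real mat" where
  "perm_mat n p = mat n n (\<lambda>(i,j). if i = p j then 1 else 0)"

definition is_perm_mat :: "nat \<Rightarrow> real mat \<Rightarrow> bool" where
  "is_perm_mat n P \<longleftrightarrow> (\<exists>p. p permutes {..<n} \<and> P = perm_mat n p)"

text \<open>Partition of L_s with the last node as input: A_s^f and B_s^f.\<close>
definition follower_block :: "nat \<Rightarrow> real mat \<Rightarrow> real mat" where
  "follower_block n L = mat (n-1) (n-1) (\<lambda>(i,j). L $$ (i,j))"

definition input_block :: "nat \<Rightarrow> real mat \<Rightarrow> real mat" where
  "input_block n L = mat (n-1) 1 (\<lambda>(i,_). L $$ (i, n-1))"

text \<open>Kalman controllability matrix [B, AB, ..., A^(m-1) B] for A m x m, B m x p.\<close>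
definition ctrb_mat :: "real mat \<Rightarrow> real mat \<Rightarrow> real mat" where
  "ctrb_mat A B = mat (dim_row A) (dim_row A * dim_col B)
     (\<lambda>(i,c). ((A ^\<^sub>m (c div dim_col B)) * B) $$ (i, c mod dim_col B))"

definition controllable :: "real mat \<Rightarrow> real mat \<Rightarrow> bool" where
  "controllable A B \<longleftrightarrow> vec_space.rank (dim_row A) (ctrb_mat A B) = dim_row A"

end

theory Submission
  imports Defs
begin

text \<open>Let \<open>\<sigma>\<close> be the balancing signature and \<open>p\<close> the permutation of the input symmetry, which
fixes the input node. Conjugating the follower dynamics by the gauge \<open>G\<^sub>t\<close>, the system becomes
\<open>p\<close>-symmetric, so the subspace of vectors \<open>v\<close> with \<open>\<sigma>(p i) v(p i) = \<sigma> i v i\<close> contains the input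
column and is invariant under the follower matrix. Hence every column of the controllability
matrix lies in it, and for a node \<open>i\<^sub>0\<close> moved by \<open>p\<close> the nonzero vector
\<open>\<sigma>(i\<^sub>0) e\<^sub>i\<^sub>0 - \<sigma>(p i\<^sub>0) e\<^sub>p\<^sub>i\<^sub>0\<close> annihilates all of them, so the controllability matrix is singular.\<close>

lemma index_gauge_conj:
  assumes X: "X \<in> carrier_mat n n" and i: "i < n" and j: "j < n"
  shows "(gauge_mat n \<sigma> * X * gauge_mat n \<sigma>) $$ (i,j) = \<sigma> i * X $$ (i,j) * \<sigma> j"
proof -
  have left: "(gauge_mat n \<sigma> * X) $$ (i,k) = \<sigma> i * X $$ (i,k)" if k: "k < n" for k
  proof -
    have "(gauge_mat n \<sigma> * X) $$ (i,k) = (\<Sum>l<n. (if i = l then \<sigma> i else 0) * X $$ (l,k))"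
      using X i k by (simp add: gauge_mat_def scalar_prod_def lessThan_atLeast0)
    also have "\<dots> = (\<Sum>l<n. (if l = i then \<sigma> i * X $$ (i,k) else 0))"
      by (rule sum.cong) auto
    finally show ?thesis using i by simp
  qed
  have "(gauge_mat n \<sigma> * X * gauge_mat n \<sigma>) $$ (i,j)
      = (\<Sum>k<n. (gauge_mat n \<sigma> * X) $$ (i,k) * (if k = j then \<sigma> k else 0))"
    using X i j by (simp add: gauge_mat_def scalar_prod_def lessThan_atLeast0)
  also have "\<dots> = (\<Sum>k<n. (if k = j then (gauge_mat n \<sigma> * X) $$ (i,k) * \<sigma> j else 0))"
    by (rule sum.cong) auto
  finally show ?thesis using j left[OF j] by simp
qed

lemma permutes_eq_apply_iff_inv:
  assumes "p permutes S"
  shows "(i = p k) = (k = Hilbert_Choice.inv p i)"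
  using permutes_inv_eq[OF assms] by metis

lemma index_mult_perm_mat_left:
  assumes p: "p permutes {..<n}" and X: "X \<in> carrier_mat n q" and i: "i < n" and j: "j < q"
  shows "(perm_mat n p * X) $$ (i,j) = X $$ (Hilbert_Choice.inv p i, j)"
proof -
  have "(perm_mat n p * X) $$ (i,j) = (\<Sum>k<n. (if i = p k then 1 else 0) * X $$ (k,j))"
    using X i j by (simp add: perm_mat_def scalar_prod_def lessThan_atLeast0)
  also have "\<dots> = (\<Sum>k<n. (if k = Hilbert_Choice.inv p i then X $$ (k,j) else 0))"
    by (rule sum.cong) (auto simp: permutes_eq_apply_iff_inv[OF p])
  finally show ?thesis using permutes_in_image[OF permutes_inv[OF p]] i by simp
qed

lemma index_mult_perm_mat_right:
  assumes p: "p permutes {..<n}" and X: "X \<in> carrier_mat q n" and i: "i < q" and j: "j < n"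
  shows "(X * perm_mat n p) $$ (i,j) = X $$ (i, p j)"
proof -
  have "(X * perm_mat n p) $$ (i,j) = (\<Sum>k<n. X $$ (i,k) * (if k = p j then 1 else 0))"
    using X i j by (simp add: perm_mat_def scalar_prod_def lessThan_atLeast0)
  also have "\<dots> = (\<Sum>k<n. (if k = p j then X $$ (i,k) else 0))"
    by (rule sum.cong) auto
  finally show ?thesis using permutes_in_image[OF p] j by simp
qed

lemma index_perm_mat_mult_vec:
  assumes p: "p permutes {..<n}" and v: "v \<in> carrier_vec n" and i: "i < n"
  shows "(perm_mat n p *\<^sub>v v) $ i = v $ Hilbert_Choice.inv p i"
proof -
  have "(perm_mat n p *\<^sub>v v) $ i = (\<Sum>k<n. (if i = p k then 1 else 0) * v $ k)"
    using v i by (simp add: perm_mat_def scalar_prod_def lessThan_atLeast0)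
  also have "\<dots> = (\<Sum>k<n. (if k = Hilbert_Choice.inv p i then v $ k else 0))"
    by (rule sum.cong) (auto simp: permutes_eq_apply_iff_inv[OF p])
  finally show ?thesis using permutes_in_image[OF permutes_inv[OF p]] i by simp
qed

lemma perm_mat_commute_imp_index_perm:
  assumes p: "p permutes {..<n}" and X: "X \<in> carrier_mat n n"
    and comm: "perm_mat n p * X = X * perm_mat n p" and i: "i < n" and j: "j < n"
  shows "X $$ (p i, p j) = X $$ (i, j)"
proof -
  have pi: "p i < n" using permutes_in_image[OF p] i by simp
  have "(perm_mat n p * X) $$ (p i, j) = (X * perm_mat n p) $$ (p i, j)" using comm by simp
  then show ?thesis
    using index_mult_perm_mat_left[OF p X pi j] index_mult_perm_mat_right[OF p X pi j]
      permutes_inverses(2)[OF p] by simp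
qed

lemma perm_mat_fixes_unit_vec_imp_fixpoint:
  assumes p: "p permutes {..<n}" and k: "k < n"
    and fixed: "perm_mat n p *\<^sub>v unit_vec n k = unit_vec n k"
  shows "p k = k"
proof -
  have "(perm_mat n p *\<^sub>v unit_vec n k) $ k = unit_vec n k $ k"
    using fixed by simp
  then have "(unit_vec n k :: real vec) $ Hilbert_Choice.inv p k = 1"
    using index_perm_mat_mult_vec[OF p, of "unit_vec n k" k] k by simp
  moreover have "Hilbert_Choice.inv p k < n" using permutes_in_image[OF permutes_inv[OF p]] k by simp
  ultimately have "Hilbert_Choice.inv p k = k" using k by (simp split: if_splits)
  then show ?thesis using p by (metis permutes_inverses(1))
qed

lemma perm_mat_neq_one_imp_moves:
  assumes "perm_mat n p \<noteq> 1\<^sub>m n"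
  obtains i where "i < n" "p i \<noteq> i"
proof -
  have "\<exists>i<n. p i \<noteq> i"
  proof (rule ccontr)
    assume "\<not> (\<exists>i<n. p i \<noteq> i)"
    then have "perm_mat n p = 1\<^sub>m n" by (intro eq_matI) (auto simp: perm_mat_def)
    with assms show False by simp
  qed
  then show thesis using that by blast
qed

text \<open>In matrix terms: \<open>G\<^sub>t A G\<^sub>t\<close> commutes with \<open>\<Pi>\<close>, and every column of \<open>G\<^sub>t X\<close> is fixed by \<open>\<Pi>\<close>,
where \<open>G\<^sub>t = diag \<sigma>\<close> and \<open>\<Pi>\<close> is the permutation matrix of \<open>p\<close>.\<close>

definition gauge_perm_symmetric :: "nat \<Rightarrow> (nat \<Rightarrow> real) \<Rightarrow> (nat \<Rightarrow> nat) \<Rightarrow> real mat \<Rightarrow> bool" where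
  "gauge_perm_symmetric m \<sigma> p A \<longleftrightarrow>
     (\<forall>i<m. \<forall>j<m. \<sigma> (p i) * A $$ (p i, p j) * \<sigma> (p j) = \<sigma> i * A $$ (i, j) * \<sigma> j)"

definition gauge_perm_invariant :: "nat \<Rightarrow> (nat \<Rightarrow> real) \<Rightarrow> (nat \<Rightarrow> nat) \<Rightarrow> real mat \<Rightarrow> bool" where
  "gauge_perm_invariant m \<sigma> p X \<longleftrightarrow>
     (\<forall>i<m. \<forall>c<dim_col X. \<sigma> (p i) * X $$ (p i, c) = \<sigma> i * X $$ (i, c))"

lemma perm_mat_commute_gauge_conj_imp_symmetric:
  assumes p: "p permutes {..<n}" and X: "X \<in> carrier_mat n n"
    and comm: "perm_mat n p * (gauge_mat n \<sigma> * X * gauge_mat n \<sigma>)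
             = (gauge_mat n \<sigma> * X * gauge_mat n \<sigma>) * perm_mat n p"
  shows "gauge_perm_symmetric n \<sigma> p X"
  unfolding gauge_perm_symmetric_def
proof (intro allI impI)
  fix i j assume i: "i < n" and j: "j < n"
  have G: "gauge_mat n \<sigma> \<in> carrier_mat n n" by (simp add: gauge_mat_def)
  have GXG: "gauge_mat n \<sigma> * X * gauge_mat n \<sigma> \<in> carrier_mat n n"
    using G X by (meson mult_carrier_mat)
  have "p i < n" "p j < n" using permutes_in_image[OF p] i j by auto
  then show "\<sigma> (p i) * X $$ (p i, p j) * \<sigma> (p j) = \<sigma> i * X $$ (i, j) * \<sigma> j"
    using perm_mat_commute_imp_index_perm[OF p GXG comm i j] index_gauge_conj[OF X] i j
    by simp
qed

lemma gauge_perm_invariant_mult: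
  assumes p: "p permutes {..<m}" and sq: "\<forall>i<m. \<sigma> i * \<sigma> i = 1"
    and A: "A \<in> carrier_mat m m" and sym: "gauge_perm_symmetric m \<sigma> p A"
    and X: "X \<in> carrier_mat m q" and inv: "gauge_perm_invariant m \<sigma> p X"
  shows "gauge_perm_invariant m \<sigma> p (A * X)"
  unfolding gauge_perm_invariant_def
proof (intro allI impI)
  fix i c assume i: "i < m" and "c < dim_col (A * X)"
  then have c: "c < q" using X by simp
  have pim: "p j < m" if "j < m" for j using permutes_in_image[OF p] that by simp
  have term_perm: "\<sigma> (p i) * A $$ (p i, p j) * X $$ (p j, c) = \<sigma> i * A $$ (i, j) * X $$ (j, c)"
    if j: "j < m" for j
  proof -
    have "\<sigma> (p i) * A $$ (p i, p j) * X $$ (p j, c)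
        = (\<sigma> (p i) * A $$ (p i, p j) * \<sigma> (p j)) * (\<sigma> (p j) * X $$ (p j, c))"
      using sq pim[OF j] by (simp add: algebra_simps)
    also have "\<dots> = (\<sigma> i * A $$ (i, j) * \<sigma> j) * (\<sigma> j * X $$ (j, c))"
      using sym inv i j c X unfolding gauge_perm_symmetric_def gauge_perm_invariant_def by simp
    also have "\<dots> = \<sigma> i * A $$ (i, j) * X $$ (j, c)"
      using sq j by (simp add: algebra_simps)
    finally show ?thesis .
  qed
  have "\<sigma> (p i) * (A * X) $$ (p i, c) = (\<Sum>j<m. \<sigma> (p i) * A $$ (p i, j) * X $$ (j, c))"
    using A X c pim[OF i]
    by (simp add: scalar_prod_def lessThan_atLeast0 sum_distrib_left algebra_simps)
  also have "\<dots> = (\<Sum>j<m. \<sigma> (p i) * A $$ (p i, p j) * X $$ (p j, c))"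
    using sum.reindex_bij_betw[OF permutes_imp_bij[OF p],
        of "\<lambda>j. \<sigma> (p i) * A $$ (p i, j) * X $$ (j, c)"] by simp
  also have "\<dots> = (\<Sum>j<m. \<sigma> i * A $$ (i, j) * X $$ (j, c))"
    using term_perm by (intro sum.cong) auto
  also have "\<dots> = \<sigma> i * (A * X) $$ (i, c)"
    using A X c i by (simp add: scalar_prod_def lessThan_atLeast0 sum_distrib_left algebra_simps)
  finally show "\<sigma> (p i) * (A * X) $$ (p i, c) = \<sigma> i * (A * X) $$ (i, c)" .
qed

lemma gauge_perm_invariant_pow_mult:
  assumes p: "p permutes {..<m}" and sq: "\<forall>i<m. \<sigma> i * \<sigma> i = 1"
    and A: "A \<in> carrier_mat m m" and sym: "gauge_perm_symmetric m \<sigma> p A"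
    and X: "X \<in> carrier_mat m q" and inv: "gauge_perm_invariant m \<sigma> p X"
  shows "gauge_perm_invariant m \<sigma> p (A ^\<^sub>m k * X)"
  using X inv
proof (induction k arbitrary: X)
  case 0
  then show ?case using A by simp
next
  case (Suc k)
  have "A ^\<^sub>m Suc k * X = A ^\<^sub>m k * (A * X)"
    using A Suc.prems(1) by (simp add: assoc_mult_mat[of _ m m _ m _ q])
  then show ?case
    using Suc gauge_perm_invariant_mult[OF p sq A sym] A by simp
qed

lemma rank_lt_if_left_null_vector:
  fixes C :: "'a :: field mat"
  assumes C: "C \<in> carrier_mat m m" and w: "w \<in> carrier_vec m" "w \<noteq> 0\<^sub>v m"
    and null: "transpose_mat C *\<^sub>v w = 0\<^sub>v m"
  shows "vec_space.rank m C < m"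
proof -
  have "det (transpose_mat C) = 0"
    using det_0_iff_vec_prod_zero_field[of "transpose_mat C" m] C w null by auto
  then have "det C = 0" using det_transpose[OF C] by simp
  then show ?thesis using vec_space.det_zero_low_rank[OF C] by blast
qed

lemma not_controllable_if_gauge_perm_symmetric:
  assumes p: "p permutes {..<m}" and i0: "i0 < m" "p i0 \<noteq> i0"
    and sq: "\<forall>i<m. \<sigma> i * \<sigma> i = 1"
    and A: "A \<in> carrier_mat m m" and sym: "gauge_perm_symmetric m \<sigma> p A"
    and B: "B \<in> carrier_mat m 1" and inv: "gauge_perm_invariant m \<sigma> p B"
  shows "\<not> controllable A B"
proof -
  define C where "C = ctrb_mat A B"
  have C: "C \<in> carrier_mat m m" using A B unfolding C_def ctrb_mat_def by auto
  have C_index: "C $$ (i,c) = (A ^\<^sub>m c * B) $$ (i, 0)" if "i < m" "c < m" for i c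
    using that A B unfolding C_def ctrb_mat_def by auto
  have pi0: "p i0 < m" using permutes_in_image[OF p] i0 by simp
  define w where
    "w = vec m (\<lambda>i. (if i = i0 then \<sigma> i0 else 0) - (if i = p i0 then \<sigma> (p i0) else 0))"
  have w: "w \<in> carrier_vec m" unfolding w_def by simp
  have w_nonzero: "w \<noteq> 0\<^sub>v m"
  proof
    assume "w = 0\<^sub>v m"
    then have "w $ i0 = 0" using i0 by simp
    then show False using i0 sq unfolding w_def by auto
  qed
  have "transpose_mat C *\<^sub>v w = 0\<^sub>v m"
  proof (rule eq_vecI)
    fix c assume "c < dim_vec (0\<^sub>v m :: real vec)"
    then have c: "c < m" by simp
    define f where "f i = (A ^\<^sub>m c * B) $$ (i, 0)" for i
    have "(transpose_mat C *\<^sub>v w) $ c = (\<Sum>i<m. C $$ (i,c) * w $ i)"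
      using C w c by (simp add: scalar_prod_def lessThan_atLeast0 mult.commute)
    also have "\<dots> = (\<Sum>i<m. (if i = i0 then f i * \<sigma> i0 else 0)
                            - (if i = p i0 then f i * \<sigma> (p i0) else 0))"
      by (rule sum.cong) (auto simp: C_index c f_def w_def)
    also have "\<dots> = f i0 * \<sigma> i0 - f (p i0) * \<sigma> (p i0)"
      using i0 pi0 by (simp add: sum_subtractf)
    also have "\<dots> = 0"
      using gauge_perm_invariant_pow_mult[OF p sq A sym B inv, of c] A B i0
      unfolding gauge_perm_invariant_def f_def by (auto simp: mult.commute)
    finally show "(transpose_mat C *\<^sub>v w) $ c = 0\<^sub>v m $ c" using c by simp
  qed (use C in auto)
  then have "vec_space.rank m C < m" by (rule rank_lt_if_left_null_vector[OF C w w_nonzero])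
  then show ?thesis using A unfolding controllable_def C_def by simp
qed

lemma gauge_perm_symmetric_follower_block:
  assumes sym: "gauge_perm_symmetric n \<sigma> p L"
    and p: "\<forall>i<n - 1. p i < n - 1"
  shows "gauge_perm_symmetric (n - 1) \<sigma> p (- follower_block n L)"
  unfolding gauge_perm_symmetric_def
proof (intro allI impI)
  fix i j assume i: "i < n - 1" and j: "j < n - 1"
  have "\<sigma> (p i) * L $$ (p i, p j) * \<sigma> (p j) = \<sigma> i * L $$ (i, j) * \<sigma> j"
    using sym i j unfolding gauge_perm_symmetric_def by simp
  then show "\<sigma> (p i) * (- follower_block n L) $$ (p i, p j) * \<sigma> (p j)
           = \<sigma> i * (- follower_block n L) $$ (i, j) * \<sigma> j"
    using i j p by (simp add: follower_block_def)
qed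

lemma gauge_perm_invariant_input_block:
  assumes sym: "gauge_perm_symmetric n \<sigma> p L" and n: "n \<noteq> 0"
    and p: "\<forall>i<n - 1. p i < n - 1" and fixed: "p (n - 1) = n - 1"
    and sq: "\<sigma> (n - 1) * \<sigma> (n - 1) = 1"
  shows "gauge_perm_invariant (n - 1) \<sigma> p (- input_block n L)"
  unfolding gauge_perm_invariant_def
proof (intro allI impI)
  fix i c assume i: "i < n - 1" and "c < dim_col (- input_block n L)"
  then have c: "c = 0" by (simp add: input_block_def)
  have "i < n" "n - 1 < n" using i n by auto
  then have "\<sigma> (p i) * L $$ (p i, p (n - 1)) * \<sigma> (p (n - 1))
           = \<sigma> i * L $$ (i, n - 1) * \<sigma> (n - 1)"
    using sym unfolding gauge_perm_symmetric_def by blast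
  then have "\<sigma> (p i) * L $$ (p i, n - 1) * \<sigma> (n - 1) = \<sigma> i * L $$ (i, n - 1) * \<sigma> (n - 1)"
    unfolding fixed .
  then have "\<sigma> (p i) * L $$ (p i, n - 1) = \<sigma> i * L $$ (i, n - 1)"
    using sq by (metis mult_cancel_right zero_neq_one mult_zero_left)
  then show "\<sigma> (p i) * (- input_block n L) $$ (p i, c) = \<sigma> i * (- input_block n L) $$ (i, c)"
    using i p c by (simp add: input_block_def)
qed

theorem theorem4:
  fixes n :: nat and W :: "real mat"
  assumes graph: "signed_graph n W"
    and conn: "connected_graph n W"
    and balanced_symmetric:
      "\<exists>\<sigma>. (\<forall>i<n. \<sigma> i = 1 \<or> \<sigma> i = -1)
          \<and> (\<forall>i<n. \<forall>j<n.
               (gauge_mat n \<sigma> * signed_adj W * gauge_mat n \<sigma>) $$ (i,j) \<ge> 0)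
          \<and> (\<exists>Pm. is_perm_mat n Pm \<and> Pm \<noteq> 1\<^sub>m n
                 \<and> Pm * (gauge_mat n \<sigma> * signed_laplacian W * gauge_mat n \<sigma>)
                   = (gauge_mat n \<sigma> * signed_laplacian W * gauge_mat n \<sigma>) * Pm
                 \<and> Pm *\<^sub>v unit_vec n (n - 1) = unit_vec n (n - 1))"
  shows "\<not> controllable (- follower_block n (signed_laplacian W))
                         (- input_block n (signed_laplacian W))"
proof -
  define L where "L = signed_laplacian W"
  obtain \<sigma> Pm where sign: "\<forall>i<n. \<sigma> i = 1 \<or> \<sigma> i = -1" and Pm: "is_perm_mat n Pm"
    and nontrivial: "Pm \<noteq> 1\<^sub>m n"
    and comm: "Pm * (gauge_mat n \<sigma> * L * gauge_mat n \<sigma>) = (gauge_mat n \<sigma> * L * gauge_mat n \<sigma>) * Pm"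
    and fixed: "Pm *\<^sub>v unit_vec n (n - 1) = unit_vec n (n - 1)"
    using balanced_symmetric unfolding L_def by blast
  obtain p where p: "p permutes {..<n}" and Pm_def: "Pm = perm_mat n p"
    using Pm unfolding is_perm_mat_def by blast
  have sq: "\<forall>i<n. \<sigma> i * \<sigma> i = 1" using sign by force
  have L: "L \<in> carrier_mat n n"
    using graph unfolding L_def signed_graph_def signed_laplacian_def signed_deg_def signed_adj_def
    by auto
  obtain i0 where i0: "i0 < n" "p i0 \<noteq> i0" using perm_mat_neq_one_imp_moves[OF nontrivial[unfolded Pm_def]] .
  then have n: "n \<noteq> 0" by simp
  have p_last: "p (n - 1) = n - 1" using perm_mat_fixes_unit_vec_imp_fixpoint[OF p _ fixed[unfolded Pm_def]] n by simp
  have p_follower: "p permutes {..<n - 1}"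
  proof (rule permutes_superset[OF p])
    fix x assume "x \<in> {..<n} - {..<n - 1}"
    then have "x = n - 1" by auto
    then show "p x = x" using p_last by simp
  qed
  have p_follower_range: "\<forall>i<n - 1. p i < n - 1" using permutes_in_image[OF p_follower] by simp
  have sym: "gauge_perm_symmetric n \<sigma> p L"
    by (rule perm_mat_commute_gauge_conj_imp_symmetric[OF p L comm[unfolded Pm_def]])
  have "i0 \<noteq> n - 1" using i0(2) p_last by auto
  then have i0_follower: "i0 < n - 1" using i0(1) by simp
  show ?thesis
    unfolding L_def[symmetric]
  proof (rule not_controllable_if_gauge_perm_symmetric[OF p_follower i0_follower i0(2)])
    show "\<forall>i<n - 1. \<sigma> i * \<sigma> i = 1" using sq by simp
    show "gauge_perm_symmetric (n - 1) \<sigma> p (- follower_block n L)"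
      using gauge_perm_symmetric_follower_block[OF sym p_follower_range] .
    show "gauge_perm_invariant (n - 1) \<sigma> p (- input_block n L)"
      using gauge_perm_invariant_input_block[OF sym n p_follower_range p_last] sq n by simp
  qed (simp_all add: follower_block_def input_block_def)
qed

end
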